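(* Let $m\geq 3$ and $n\geq 2$ be integers with $m\leq n$, let $K_m$ and $K_n$ be the complete graphs of orders $m$ and $n$. Then $rvcl(K_m\diamond K_n)=n+1$ if $n\geq |E(K_m)|-1$, and $rvcl(K_m\diamond K_n)=n+2$ if $n<|E(K_m)|-1$, where $|E(K_m)|=m(m-1)/2$.
   Context: All graphs are finite, simple, connected and undirected; $d$ denotes graph distance. A rainbow vertex $k$-coloring of $G$ is a map $c:V(G)\to\{1,\dots,k\}$ such that every two vertices are joined by a path whose internal vertices all receive distinct colors. For such $c$ let $R_i=c^{-1}(i)$; the rainbow code of $v$ is $(d(v,R_1),\dots,d(v,R_k))$ with $d(v,R_i)=\min_{x\in R_i}d(v,x)$. A locating rainbow $k$-coloring is a rainbow vertex $k$-coloring in which distinct vertices have distinct rainbow codes; $rvcl(G)$ is the least $k$ for which one exists. For graphs $G_m$ (order $m$) and $H_n$ (order $n$) on disjoint vertex sets, the edge corona $G_m\diamond H_n$ is obtained from one copy of $G_m$ and $|E(G_m)|$ vertex-disjoint copies of $H_n$, one per edge of $G_m$, by joining both end vertices of the $j$-th edge of $G_m$ to every vertex of the $j$-th copy of $H_n$. *)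

theory Defs
  imports Main "HOL-Library.Extended_Nat"
begin

type_synonym 'a graph = "'a set \<times> 'a set set"

definition verts :: "'a graph \<Rightarrow> 'a set" where "verts G = fst G"
definition edges :: "'a graph \<Rightarrow> 'a set set" where "edges G = snd G"

definition simple_graph :: "'a graph \<Rightarrow> bool" where
  "simple_graph G \<longleftrightarrow> finite (verts G) \<and>
     (\<forall>e\<in>edges G. \<exists>u v. e = {u, v} \<and> u \<noteq> v \<and> u \<in> verts G \<and> v \<in> verts G)"

definition is_path :: "'a graph \<Rightarrow> 'a \<Rightarrow> 'a \<Rightarrow> 'a list \<Rightarrow> bool" where
  "is_path G u v p \<longleftrightarrow> p \<noteq> [] \<and> hd p = u \<and> last p = v \<and> distinct p \<and>
     set p \<subseteq> verts G \<and> (\<forall>i. Suc i < length p \<longrightarrow> {p ! i, p ! Suc i} \<in> edges G)"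

definition connected_graph :: "'a graph \<Rightarrow> bool" where
  "connected_graph G \<longleftrightarrow> verts G \<noteq> {} \<and>
     (\<forall>u\<in>verts G. \<forall>v\<in>verts G. \<exists>p. is_path G u v p)"

definition gdist :: "'a graph \<Rightarrow> 'a \<Rightarrow> 'a \<Rightarrow> nat" where
  "gdist G u v = (LEAST k. \<exists>p. is_path G u v p \<and> length p = Suc k)"

text \<open>Distance from a vertex to a set of vertices (infinite for the empty set).\<close>
definition setdist :: "'a graph \<Rightarrow> 'a \<Rightarrow> 'a set \<Rightarrow> enat" where
  "setdist G v R = (INF x\<in>R. enat (gdist G v x))"

definition rainbow_vertex_coloring :: "'a graph \<Rightarrow> nat \<Rightarrow> ('a \<Rightarrow> nat) \<Rightarrow> bool" where
  "rainbow_vertex_coloring G k c \<longleftrightarrow>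
     (\<forall>v\<in>verts G. c v \<in> {1..k}) \<and>
     (\<forall>u\<in>verts G. \<forall>v\<in>verts G. \<exists>p. is_path G u v p \<and> distinct (map c (butlast (tl p))))"

definition color_class :: "'a graph \<Rightarrow> ('a \<Rightarrow> nat) \<Rightarrow> nat \<Rightarrow> 'a set" where
  "color_class G c i = {x \<in> verts G. c x = i}"

definition rainbow_code :: "'a graph \<Rightarrow> nat \<Rightarrow> ('a \<Rightarrow> nat) \<Rightarrow> 'a \<Rightarrow> enat list" where
  "rainbow_code G k c v = map (\<lambda>i. setdist G v (color_class G c i)) [1..<Suc k]"

definition locating_rainbow_coloring :: "'a graph \<Rightarrow> nat \<Rightarrow> ('a \<Rightarrow> nat) \<Rightarrow> bool" where
  "locating_rainbow_coloring G k c \<longleftrightarrow> rainbow_vertex_coloring G k c \<and>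
     inj_on (rainbow_code G k c) (verts G)"

definition rvcl :: "'a graph \<Rightarrow> nat" where
  "rvcl G = (LEAST k. \<exists>c. locating_rainbow_coloring G k c)"

definition complete_graph :: "nat \<Rightarrow> nat graph" where
  "complete_graph n = ({0..<n}, {{i, j} | i j. i < n \<and> j < n \<and> i \<noteq> j})"

text \<open>Edge corona G \<diamond> H: a copy of G (vertices Inl x) and, for each edge e of G,
  a copy of H (vertices Inr (e, y)), with both ends of e joined to every vertex
  of the copy of H indexed by e.\<close>
definition edge_corona :: "'a graph \<Rightarrow> 'b graph \<Rightarrow> ('a + ('a set \<times> 'b)) graph" where
  "edge_corona G H =
    (Inl ` verts G \<union> {Inr (e, y) | e y. e \<in> edges G \<and> y \<in> verts H},
     (\<lambda>e. Inl ` e) ` edges G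
     \<union> {(\<lambda>y. Inr (e, y)) ` f | e f. e \<in> edges G \<and> f \<in> edges H}
     \<union> {{Inl x, Inr (e, y)} | x e y. e \<in> edges G \<and> x \<in> e \<and> y \<in> verts H})"

end

theory Submission
  imports Defs
begin

text \<open>
  The edge corona of \<open>K_m\<close> and \<open>K_n\<close> has diameter at most three, so the rainbow code of a
  vertex is determined by its colour and by the colours it sees at distance at most one and at
  most two. Any two vertices are joined by a path with at most one interior vertex or with two
  interior vertices in \<open>K_m\<close>, hence every colouring that is injective on \<open>K_m\<close> is rainbow.

  Two vertices of one copy of \<open>K_n\<close> have the same neighbourhoods, so each copy
  uses \<open>n\<close> distinct colours; with only \<open>n\<close> colours every copy vertex sees all colours, and
  two vertices of the same colour in different copies are indistinguishable. With \<open>n + 1\<close>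
  colours each copy misses exactly one colour \<open>\<sigma> e\<close>, which cannot occur at the ends of \<open>e\<close> either; comparing
  copy vertices with each other and with end vertices shows that \<open>\<sigma>\<close> is injective, so
  \<open>|E(K_m)| \<le> n + 1\<close>.

  A colouring in which every vertex of \<open>K_m\<close> sees all colours and the copies of
  different edges miss different nonempty sets of colours (not counting the colours of their
  ends) is locating. Such colourings exist with \<open>n + 1\<close> colours if \<open>|E(K_m)| \<le> n + 1\<close>, and with
  \<open>n + 2\<close> colours if \<open>4 \<le> m \<le> n\<close>; for \<open>m = 3\<close> always \<open>|E(K_m)| = 3 \<le> n + 1\<close>.
\<close>

definition closed_nbhd :: "'a graph \<Rightarrow> 'a \<Rightarrow> 'a set" where
  "closed_nbhd G v = {x \<in> verts G. x = v \<or> {v, x} \<in> edges G}"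

definition closed_nbhd2 :: "'a graph \<Rightarrow> 'a \<Rightarrow> 'a set" where
  "closed_nbhd2 G v = (\<Union>w\<in>closed_nbhd G v. closed_nbhd G w)"

definition diameter_le :: "'a graph \<Rightarrow> nat \<Rightarrow> bool" where
  "diameter_le G d \<longleftrightarrow> (\<forall>u\<in>verts G. \<forall>v\<in>verts G. \<exists>p. is_path G u v p \<and> length p \<le> Suc d)"

lemma closed_nbhd_subset_verts: "closed_nbhd G v \<subseteq> verts G"
  unfolding closed_nbhd_def by blast

lemma closed_nbhd_refl: "v \<in> verts G \<Longrightarrow> v \<in> closed_nbhd G v"
  unfolding closed_nbhd_def by blast

lemma closed_nbhd_sym:
  "u \<in> verts G \<Longrightarrow> v \<in> verts G \<Longrightarrow> v \<in> closed_nbhd G u \<longleftrightarrow> u \<in> closed_nbhd G v"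
  unfolding closed_nbhd_def by (auto simp: insert_commute)

lemma closed_nbhd_subset_nbhd2: "v \<in> verts G \<Longrightarrow> closed_nbhd G v \<subseteq> closed_nbhd2 G v"
  unfolding closed_nbhd2_def closed_nbhd_def by auto

lemma closed_nbhd2_subset_verts: "closed_nbhd2 G v \<subseteq> verts G"
  unfolding closed_nbhd2_def closed_nbhd_def by blast

lemma is_path_single: "u \<in> verts G \<Longrightarrow> is_path G u u [u]"
  by (auto simp: is_path_def)

lemma is_path_edge: "u \<in> verts G \<Longrightarrow> v \<in> verts G \<Longrightarrow> u \<noteq> v \<Longrightarrow> {u, v} \<in> edges G \<Longrightarrow>
    is_path G u v [u, v]"
  by (auto simp: is_path_def less_Suc_eq)

lemma is_path_two_edges: "distinct [u, w, v] \<Longrightarrow> set [u, w, v] \<subseteq> verts G \<Longrightarrow>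
    {u, w} \<in> edges G \<Longrightarrow> {w, v} \<in> edges G \<Longrightarrow> is_path G u v [u, w, v]"
  by (auto simp: is_path_def less_Suc_eq)

lemma is_path_three_edges: "distinct [u, w, z, v] \<Longrightarrow> set [u, w, z, v] \<subseteq> verts G \<Longrightarrow>
    {u, w} \<in> edges G \<Longrightarrow> {w, z} \<in> edges G \<Longrightarrow> {z, v} \<in> edges G \<Longrightarrow> is_path G u v [u, w, z, v]"
  by (auto simp: is_path_def less_Suc_eq)

lemma is_path_verts: "is_path G u v p \<Longrightarrow> u \<in> verts G \<and> v \<in> verts G"
  unfolding is_path_def by (metis hd_in_set last_in_set subset_iff)

lemma is_path_length_1: "is_path G u v p \<Longrightarrow> length p = 1 \<Longrightarrow> u = v"
  by (cases p) (auto simp: is_path_def)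

lemma is_path_length_2: "is_path G u v p \<Longrightarrow> length p = 2 \<Longrightarrow> v \<in> closed_nbhd G u"
  by (auto simp: is_path_def closed_nbhd_def numeral_eq_Suc length_Suc_conv)

lemma is_path_length_3: "is_path G u v p \<Longrightarrow> length p = 3 \<Longrightarrow> v \<in> closed_nbhd2 G u"
proof -
  assume p: "is_path G u v p" "length p = 3"
  then obtain w where "p = [u, w, v]"
    by (auto simp: is_path_def numeral_eq_Suc length_Suc_conv)
  then show ?thesis
    using p(1) unfolding is_path_def closed_nbhd2_def closed_nbhd_def by (auto simp: less_Suc_eq)
qed

lemma path_within_nbhd:
  assumes u: "u \<in> verts G" and v: "v \<in> closed_nbhd G u"
  shows "\<exists>p. is_path G u v p \<and> length p \<le> 2"
proof (cases "v = u")
  case True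
  then show ?thesis using is_path_single[OF u] by fastforce
next
  case False
  then have "{u, v} \<in> edges G" "v \<in> verts G" using v by (auto simp: closed_nbhd_def)
  then have "is_path G u v [u, v]" using is_path_edge u \<open>v \<noteq> u\<close> by metis
  then show ?thesis by fastforce
qed

lemma path_within_nbhd2:
  assumes u: "u \<in> verts G" and v: "v \<in> closed_nbhd2 G u"
  shows "\<exists>p. is_path G u v p \<and> length p \<le> 3"
proof (cases "v \<in> closed_nbhd G u")
  case True
  then show ?thesis using path_within_nbhd[OF u] by fastforce
next
  case False
  obtain w where w: "w \<in> closed_nbhd G u" "v \<in> closed_nbhd G w"
    using v unfolding closed_nbhd2_def by blast
  then have "distinct [u, w, v]" "set [u, w, v] \<subseteq> verts G" "{u, w} \<in> edges G" "{w, v} \<in> edges G"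
    using u False by (auto simp: closed_nbhd_def)
  then have "is_path G u v [u, w, v]" by (rule is_path_two_edges)
  then show ?thesis by fastforce
qed

lemma path_through_edge:
  assumes u: "u \<in> verts G" and v: "v \<in> verts G" and far: "v \<notin> closed_nbhd2 G u"
    and x: "x \<in> closed_nbhd G u" and y: "y \<in> closed_nbhd G v"
    and xy: "x \<noteq> y" "{x, y} \<in> edges G"
  shows "is_path G u v [u, x, y, v]"
proof -
  have xy_verts: "x \<in> verts G" "y \<in> verts G" using x y by (auto simp: closed_nbhd_def)
  have "v \<notin> closed_nbhd G u" using far closed_nbhd_subset_nbhd2[OF u] by blast
  moreover have "v \<notin> closed_nbhd G x" using far x unfolding closed_nbhd2_def by blast
  moreover have "y \<notin> closed_nbhd G u"
  proof
    assume "y \<in> closed_nbhd G u"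
    moreover have "v \<in> closed_nbhd G y" using closed_nbhd_sym[OF v xy_verts(2)] y by simp
    ultimately show False using far unfolding closed_nbhd2_def by blast
  qed
  ultimately have "y \<noteq> u" "x \<noteq> u" "v \<noteq> u" "v \<noteq> x" "v \<noteq> y"
    using u v xy xy_verts unfolding closed_nbhd_def by auto
  then have "distinct [u, x, y, v]" using xy by auto
  moreover have "set [u, x, y, v] \<subseteq> verts G" using u v xy_verts by auto
  moreover have "{u, x} \<in> edges G" "{y, v} \<in> edges G"
    using x y \<open>x \<noteq> u\<close> \<open>v \<noteq> y\<close> by (auto simp: closed_nbhd_def insert_commute)
  ultimately show ?thesis using xy(2) by (intro is_path_three_edges)
qed

lemma gdist_le_path_length: "is_path G u v p \<Longrightarrow> gdist G u v \<le> length p - 1"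
  unfolding gdist_def by (rule Least_le) (auto simp: is_path_def)

lemma shortest_path_exists:
  "is_path G u v p \<Longrightarrow> \<exists>q. is_path G u v q \<and> length q = Suc (gdist G u v)"
  unfolding gdist_def by (rule LeastI_ex) (auto simp: is_path_def intro!: exI[of _ "length p - 1"])

text \<open>The path premise of the following three lemmas only ensures that \<open>u\<close> and \<open>v\<close> are
  connected: otherwise \<^const>\<open>gdist\<close> is the \<open>LEAST\<close> element of an empty set.\<close>

lemma gdist_eq_0_iff: "is_path G u v p \<Longrightarrow> gdist G u v = 0 \<longleftrightarrow> u = v"
proof
  assume "is_path G u v p" "gdist G u v = 0"
  then show "u = v" using shortest_path_exists is_path_length_1 by (metis One_nat_def)
next
  assume "is_path G u v p" "u = v"
  then have "is_path G u v [u]" using is_path_single is_path_verts by metis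
  then show "gdist G u v = 0" using gdist_le_path_length by fastforce
qed

lemma gdist_le_1_iff: "is_path G u v p \<Longrightarrow> gdist G u v \<le> 1 \<longleftrightarrow> v \<in> closed_nbhd G u"
proof
  assume p: "is_path G u v p" and "gdist G u v \<le> 1"
  then consider "gdist G u v = 0" | "gdist G u v = 1" by linarith
  then show "v \<in> closed_nbhd G u"
  proof cases
    case 1
    then have "u = v" using gdist_eq_0_iff[OF p] by simp
    then show ?thesis using is_path_verts[OF p] closed_nbhd_refl by metis
  next
    case 2
    then obtain q where "is_path G u v q" "length q = 2" using shortest_path_exists[OF p] by auto
    then show ?thesis by (rule is_path_length_2)
  qed
next
  assume "is_path G u v p" "v \<in> closed_nbhd G u"
  then obtain q where "is_path G u v q" "length q \<le> 2" using path_within_nbhd is_path_verts by metis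
  then show "gdist G u v \<le> 1" using gdist_le_path_length[of G u v q] by linarith
qed

lemma gdist_le_2_iff: "is_path G u v p \<Longrightarrow> gdist G u v \<le> 2 \<longleftrightarrow> v \<in> closed_nbhd2 G u"
proof
  assume p: "is_path G u v p" and "gdist G u v \<le> 2"
  then consider "gdist G u v \<le> 1" | "gdist G u v = 2" by linarith
  then show "v \<in> closed_nbhd2 G u"
  proof cases
    case 1
    then have "v \<in> closed_nbhd G u" using gdist_le_1_iff[OF p] by simp
    then show ?thesis using closed_nbhd_subset_nbhd2 is_path_verts[OF p] by fast
  next
    case 2
    then obtain q where "is_path G u v q" "length q = 3" using shortest_path_exists[OF p] by auto
    then show ?thesis by (rule is_path_length_3)
  qed
next
  assume "is_path G u v p" "v \<in> closed_nbhd2 G u"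
  then obtain q where "is_path G u v q" "length q \<le> 3"
    using path_within_nbhd2 is_path_verts by metis
  then show "gdist G u v \<le> 2" using gdist_le_path_length[of G u v q] by linarith
qed

lemma setdist_empty: "setdist G v {} = \<infinity>"
  unfolding setdist_def by (simp add: top_enat_def)

lemma setdist_attained:
  assumes "x \<in> R" shows "\<exists>y\<in>R. setdist G v R = enat (gdist G v y)"
proof -
  have "setdist G v R \<in> (\<lambda>y. enat (gdist G v y)) ` R"
    unfolding setdist_def by (rule wellorder_InfI) (rule imageI[OF assms])
  then show ?thesis by (rule imageE) blast
qed

lemma setdist_le_enat_iff: "setdist G v R \<le> enat j \<longleftrightarrow> (\<exists>x\<in>R. gdist G v x \<le> j)"
proof
  assume le: "setdist G v R \<le> enat j"
  have "R \<noteq> {}"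
  proof
    assume "R = {}"
    then show False using le by (simp add: setdist_empty)
  qed
  then obtain y where "y \<in> R" "setdist G v R = enat (gdist G v y)"
    using setdist_attained by (metis ex_in_conv)
  then show "\<exists>x\<in>R. gdist G v x \<le> j" using le by auto
next
  assume "\<exists>x\<in>R. gdist G v x \<le> j"
  then obtain x where "x \<in> R" "gdist G v x \<le> j" by blast
  then show "setdist G v R \<le> enat j" unfolding setdist_def by (auto intro: INF_lower2)
qed

lemma setdist_diameter_le_3:
  assumes G: "diameter_le G 3" and v: "v \<in> verts G" and R: "R \<subseteq> verts G"
  shows "setdist G v R =
    (if v \<in> R then 0 else if closed_nbhd G v \<inter> R \<noteq> {} then 1
     else if closed_nbhd2 G v \<inter> R \<noteq> {} then 2 else if R \<noteq> {} then 3 else \<infinity>)"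
proof (cases "R = {}")
  case True
  then show ?thesis by (simp add: setdist_empty)
next
  case False
  have gdist: "(gdist G v x \<le> 0 \<longleftrightarrow> x = v) \<and> (gdist G v x \<le> 1 \<longleftrightarrow> x \<in> closed_nbhd G v) \<and>
      (gdist G v x \<le> 2 \<longleftrightarrow> x \<in> closed_nbhd2 G v) \<and> gdist G v x \<le> 3" if "x \<in> R" for x
  proof -
    obtain p where p: "is_path G v x p" "length p \<le> Suc 3"
      using G v R \<open>x \<in> R\<close> unfolding diameter_le_def by blast
    then show ?thesis
      using gdist_eq_0_iff[OF p(1)] gdist_le_1_iff[OF p(1)] gdist_le_2_iff[OF p(1)]
        gdist_le_path_length[OF p(1)] by auto
  qed
  obtain x where x: "x \<in> R" using False by blast
  then have "gdist G v x \<le> 3" using gdist by simp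
  then have "setdist G v R \<le> enat 3" unfolding setdist_le_enat_iff using x by blast
  then obtain k where k: "setdist G v R = enat k" "k \<le> 3" by (metis enat_ile enat_ord_simps(1))
  have k_le: "k \<le> j \<longleftrightarrow> (\<exists>x\<in>R. gdist G v x \<le> j)" for j
    using setdist_le_enat_iff[of G v R j] k(1) by simp
  have "k \<le> 0 \<longleftrightarrow> (\<exists>x\<in>R. x = v)" unfolding k_le using gdist by (intro bex_cong) simp_all
  then have "v \<in> R \<longleftrightarrow> k = 0" by auto
  moreover have "k \<le> 1 \<longleftrightarrow> (\<exists>x\<in>R. x \<in> closed_nbhd G v)"
    unfolding k_le using gdist by (intro bex_cong) simp_all
  then have "closed_nbhd G v \<inter> R \<noteq> {} \<longleftrightarrow> k \<le> 1" by blast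
  moreover have "k \<le> 2 \<longleftrightarrow> (\<exists>x\<in>R. x \<in> closed_nbhd2 G v)"
    unfolding k_le using gdist by (intro bex_cong) simp_all
  then have "closed_nbhd2 G v \<inter> R \<noteq> {} \<longleftrightarrow> k \<le> 2" by blast
  ultimately show ?thesis
    using k False by (simp add: zero_enat_def one_enat_def numeral_eq_enat)
qed

section \<open>Rainbow codes in graphs of diameter three\<close>

lemma rainbow_code_eq_iff:
  "rainbow_code G k c u = rainbow_code G k c v \<longleftrightarrow>
    (\<forall>i\<in>{1..k}. setdist G u (color_class G c i) = setdist G v (color_class G c i))"
proof -
  have "set [1..<Suc k] = {1..k}" by auto
  then show ?thesis unfolding rainbow_code_def map_eq_conv by simp
qed

lemma setdist_color_class:
  assumes G: "diameter_le G 3" and v: "v \<in> verts G"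
  shows "setdist G v (color_class G c i) =
    (if c v = i then 0 else if i \<in> c ` closed_nbhd G v then 1
     else if i \<in> c ` closed_nbhd2 G v then 2 else if i \<in> c ` verts G then 3 else \<infinity>)"
proof -
  let ?R = "color_class G c i"
  have "v \<in> ?R \<longleftrightarrow> c v = i" using v by (simp add: color_class_def)
  moreover have "closed_nbhd G v \<inter> ?R \<noteq> {} \<longleftrightarrow> i \<in> c ` closed_nbhd G v"
    using closed_nbhd_subset_verts[of G v] by (auto simp: color_class_def)
  moreover have "closed_nbhd2 G v \<inter> ?R \<noteq> {} \<longleftrightarrow> i \<in> c ` closed_nbhd2 G v"
    using closed_nbhd2_subset_verts[of G v] by (auto simp: color_class_def)
  moreover have "?R \<noteq> {} \<longleftrightarrow> i \<in> c ` verts G" by (auto simp: color_class_def)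
  moreover have "?R \<subseteq> verts G" by (auto simp: color_class_def)
  ultimately show ?thesis using setdist_diameter_le_3[OF G v] by presburger
qed

lemma rainbow_code_eqI:
  assumes G: "diameter_le G 3" and uv: "u \<in> verts G" "v \<in> verts G" and "c u = c v"
    and "\<And>i. i \<in> {1..k} \<Longrightarrow> i \<in> c ` closed_nbhd G u \<longleftrightarrow> i \<in> c ` closed_nbhd G v"
    and "\<And>i. i \<in> {1..k} \<Longrightarrow> i \<in> c ` closed_nbhd2 G u \<longleftrightarrow> i \<in> c ` closed_nbhd2 G v"
  shows "rainbow_code G k c u = rainbow_code G k c v"
  unfolding rainbow_code_eq_iff
proof
  fix i assume "i \<in> {1..k}"
  then show "setdist G u (color_class G c i) = setdist G v (color_class G c i)"
    using assms(4-6) by (simp add: setdist_color_class[OF G uv(1)] setdist_color_class[OF G uv(2)])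
qed

lemma setdist_color_class_eq_0_iff:
  "diameter_le G 3 \<Longrightarrow> v \<in> verts G \<Longrightarrow> setdist G v (color_class G c i) = 0 \<longleftrightarrow> c v = i"
  by (simp add: setdist_color_class zero_enat_def one_enat_def numeral_eq_enat)

lemma setdist_color_class_le_1_iff:
  "diameter_le G 3 \<Longrightarrow> v \<in> verts G \<Longrightarrow>
    setdist G v (color_class G c i) \<le> 1 \<longleftrightarrow> i \<in> c ` closed_nbhd G v"
  using closed_nbhd_refl[of v G]
  by (auto simp: setdist_color_class zero_enat_def one_enat_def numeral_eq_enat)

lemma inj_on_rainbow_code:
  assumes G: "diameter_le G 3" and c: "\<forall>v\<in>verts G. c v \<in> {1..k}"
    and inj: "inj_on (\<lambda>v. (c v, c ` closed_nbhd G v)) (verts G)"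
  shows "inj_on (rainbow_code G k c) (verts G)"
proof (rule inj_onI)
  fix u v assume u: "u \<in> verts G" and v: "v \<in> verts G"
    and "rainbow_code G k c u = rainbow_code G k c v"
  then have sd: "setdist G u (color_class G c i) = setdist G v (color_class G c i)"
    if "i \<in> {1..k}" for i
    using that unfolding rainbow_code_eq_iff by blast
  have "setdist G u (color_class G c (c u)) = 0" using setdist_color_class_eq_0_iff[OF G u] by simp
  then have "setdist G v (color_class G c (c u)) = 0" using sd[of "c u"] c u by simp
  then have "c v = c u" using setdist_color_class_eq_0_iff[OF G v] by simp
  moreover have "c ` closed_nbhd G u = c ` closed_nbhd G v"
  proof -
    have range: "c ` closed_nbhd G w \<subseteq> {1..k}" for w
      using c closed_nbhd_subset_verts[of G w] by auto
    have "i \<in> c ` closed_nbhd G u \<longleftrightarrow> i \<in> c ` closed_nbhd G v" if "i \<in> {1..k}" for i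
      by (simp only: setdist_color_class_le_1_iff[OF G u, symmetric]
          setdist_color_class_le_1_iff[OF G v, symmetric] sd[OF that])
    with range show ?thesis by (intro equalityI subsetI) (meson subsetD)+
  qed
  ultimately have "(c u, c ` closed_nbhd G u) = (c v, c ` closed_nbhd G v)" by simp
  then show "u = v" by (rule inj_onD[OF inj _ u v])
qed

type_synonym ('a, 'b) corona_vertex = "'a + 'a set \<times> 'b"

lemma verts_edge_corona_Inl [simp]: "Inl a \<in> verts (edge_corona G H) \<longleftrightarrow> a \<in> verts G"
  by (auto simp: edge_corona_def verts_def)

lemma verts_edge_corona_Inr [simp]:
  "Inr (e, y) \<in> verts (edge_corona G H) \<longleftrightarrow> e \<in> edges G \<and> y \<in> verts H"
  by (auto simp: edge_corona_def verts_def)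

lemma mem_edges_edge_corona: "X \<in> edges (edge_corona G H) \<longleftrightarrow>
    (\<exists>e\<in>edges G. X = Inl ` e) \<or>
    (\<exists>e\<in>edges G. \<exists>f\<in>edges H. X = (\<lambda>y. Inr (e, y)) ` f) \<or>
    (\<exists>e\<in>edges G. \<exists>x\<in>e. \<exists>y\<in>verts H. X = {Inl x, Inr (e, y)})"
  unfolding edge_corona_def edges_def snd_conv Un_iff mem_Collect_eq image_iff by fast

lemma edge_corona_edge_Inl_Inl [simp]:
  fixes G :: "'a graph" and H :: "'b graph"
  shows "{Inl a, Inl b} \<in> edges (edge_corona G H) \<longleftrightarrow> {a, b} \<in> edges G"
proof
  assume "{Inl a, Inl b} \<in> edges (edge_corona G H)"
  then show "{a, b} \<in> edges G" unfolding mem_edges_edge_corona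
  proof (elim disjE bexE)
    fix e assume e: "e \<in> edges G" "{Inl a, Inl b} = (Inl ` e :: ('a, 'b) corona_vertex set)"
    then have "Inl ` {a, b} = (Inl ` e :: ('a, 'b) corona_vertex set)" by simp
    then have "{a, b} = e" by (simp only: inj_image_eq_iff[OF inj_Inl])
    with e show ?thesis by simp
  next
    fix e and f :: "'b set"
    assume "{Inl a, Inl b} = ((\<lambda>y. Inr (e, y)) ` f :: ('a, 'b) corona_vertex set)"
    then have "(Inl a :: ('a, 'b) corona_vertex) \<in> (\<lambda>y. Inr (e, y)) ` f" by (metis insertCI)
    then show ?thesis by auto
  qed (simp add: doubleton_eq_iff)
next
  assume "{a, b} \<in> edges G"
  then have "Inl ` {a, b} \<in> edges (edge_corona G H)" unfolding mem_edges_edge_corona by blast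
  then show "{Inl a, Inl b} \<in> edges (edge_corona G H)" by simp
qed

lemma edge_corona_edge_Inl_Inr [simp]:
  fixes G :: "'a graph" and H :: "'b graph"
  shows "{Inl a, Inr (e, y)} \<in> edges (edge_corona G H) \<longleftrightarrow> e \<in> edges G \<and> a \<in> e \<and> y \<in> verts H"
proof
  assume "{Inl a, Inr (e, y)} \<in> edges (edge_corona G H)"
  then show "e \<in> edges G \<and> a \<in> e \<and> y \<in> verts H" unfolding mem_edges_edge_corona
  proof (elim disjE bexE)
    fix f assume "{Inl a, Inr (e, y)} = (Inl ` f :: ('a, 'b) corona_vertex set)"
    then have "(Inr (e, y) :: ('a, 'b) corona_vertex) \<in> Inl ` f" by (metis insertCI)
    then show ?thesis by auto
  next
    fix f and g :: "'b set"
    assume "{Inl a, Inr (e, y)} = ((\<lambda>z. Inr (f, z)) ` g :: ('a, 'b) corona_vertex set)"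
    then have "(Inl a :: ('a, 'b) corona_vertex) \<in> (\<lambda>z. Inr (f, z)) ` g" by (metis insertCI)
    then show ?thesis by auto
  qed (auto simp: doubleton_eq_iff)
next
  assume "e \<in> edges G \<and> a \<in> e \<and> y \<in> verts H"
  then show "{Inl a, Inr (e, y)} \<in> edges (edge_corona G H)" unfolding mem_edges_edge_corona by blast
qed

lemma edge_corona_edge_Inr_Inl [simp]:
  "{Inr (e, y), Inl a} \<in> edges (edge_corona G H) \<longleftrightarrow> e \<in> edges G \<and> a \<in> e \<and> y \<in> verts H"
  by (simp add: insert_commute)

lemma edge_corona_edge_Inr_Inr [simp]:
  fixes G :: "'a graph" and H :: "'b graph"
  shows "{Inr (e, y), Inr (f, z)} \<in> edges (edge_corona G H) \<longleftrightarrow>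
    e = f \<and> e \<in> edges G \<and> {y, z} \<in> edges H"
proof
  assume "{Inr (e, y), Inr (f, z)} \<in> edges (edge_corona G H)"
  then show "e = f \<and> e \<in> edges G \<and> {y, z} \<in> edges H" unfolding mem_edges_edge_corona
  proof (elim disjE bexE)
    fix g assume "{Inr (e, y), Inr (f, z)} = (Inl ` g :: ('a, 'b) corona_vertex set)"
    then have "(Inr (e, y) :: ('a, 'b) corona_vertex) \<in> Inl ` g" by (metis insertCI)
    then show ?thesis by auto
  next
    fix g :: "'a set" and h :: "'b set"
    assume gh: "g \<in> edges G" "h \<in> edges H"
      "{Inr (e, y), Inr (f, z)} = ((\<lambda>w. Inr (g, w)) ` h :: ('a, 'b) corona_vertex set)"
    then have "(Inr (e, y) :: ('a, 'b) corona_vertex) \<in> (\<lambda>w. Inr (g, w)) ` h"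
        "(Inr (f, z) :: ('a, 'b) corona_vertex) \<in> (\<lambda>w. Inr (g, w)) ` h"
      by (metis insertCI)+
    then have "e = g" "f = g" by auto
    then have "(\<lambda>w. Inr (g, w)) ` {y, z} = ({Inr (e, y), Inr (f, z)} :: ('a, 'b) corona_vertex set)"
      by simp
    also have "\<dots> = (\<lambda>w. Inr (g, w)) ` h" by (fact gh(3))
    finally have "(\<lambda>w. Inr (g, w)) ` {y, z} =
      ((\<lambda>w. Inr (g, w)) ` h :: ('a, 'b) corona_vertex set)" .
    moreover have "inj (\<lambda>w. Inr (g, w) :: ('a, 'b) corona_vertex)" by (simp add: inj_on_def)
    ultimately have "{y, z} = h" by (simp only: inj_image_eq_iff)
    with gh \<open>e = g\<close> \<open>f = g\<close> show ?thesis by simp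
  qed (auto simp: doubleton_eq_iff)
next
  assume "e = f \<and> e \<in> edges G \<and> {y, z} \<in> edges H"
  then have "(\<lambda>w. Inr (e, w)) ` {y, z} \<in> edges (edge_corona G H)"
    unfolding mem_edges_edge_corona by blast
  then show "{Inr (e, y), Inr (f, z)} \<in> edges (edge_corona G H)"
    using \<open>e = f \<and> _\<close> by simp
qed

lemma verts_complete_graph [simp]: "verts (complete_graph n) = {0..<n}"
  by (simp add: verts_def complete_graph_def)

lemma mem_edges_complete_graph:
  "e \<in> edges (complete_graph n) \<longleftrightarrow> (\<exists>i j. e = {i, j} \<and> i < n \<and> j < n \<and> i \<noteq> j)"
  by (simp add: edges_def complete_graph_def)

lemma doubleton_in_edges_complete_graph [simp]:
  "{i, j} \<in> edges (complete_graph n) \<longleftrightarrow> i < n \<and> j < n \<and> i \<noteq> j"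
  unfolding mem_edges_complete_graph by (auto simp: doubleton_eq_iff)

lemma edges_complete_graph: "edges (complete_graph n) = {e. e \<subseteq> {0..<n} \<and> card e = 2}"
proof (intro set_eqI iffI)
  fix e assume "e \<in> edges (complete_graph n)"
  then show "e \<in> {e. e \<subseteq> {0..<n} \<and> card e = 2}" by (auto simp: mem_edges_complete_graph)
next
  fix e assume "e \<in> {e. e \<subseteq> {0..<n} \<and> card e = 2}"
  then obtain i j where "e = {i, j}" "i \<noteq> j" "e \<subseteq> {0..<n}" by (auto simp: card_2_iff)
  then show "e \<in> edges (complete_graph n)" by simp
qed

lemma card_edges_complete_graph: "card (edges (complete_graph n)) = n choose 2"
  by (simp add: edges_complete_graph n_subsets)

lemma finite_edges_complete_graph: "finite (edges (complete_graph n))"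
  unfolding edges_complete_graph by (rule finite_subset[of _ "Pow {0..<n}"]) auto

lemma edge_complete_graph_lessD: "e \<in> edges (complete_graph n) \<Longrightarrow> x \<in> e \<Longrightarrow> x < n"
  by (auto simp: mem_edges_complete_graph)

lemma edge_complete_graph_other_end:
  "e \<in> edges (complete_graph n) \<Longrightarrow> x \<in> e \<Longrightarrow> \<exists>y\<in>e. y \<noteq> x"
  by (auto simp: mem_edges_complete_graph)

lemma edge_complete_graph_nonempty: "e \<in> edges (complete_graph n) \<Longrightarrow> \<exists>x. x \<in> e"
  by (auto simp: mem_edges_complete_graph)

abbreviation K_corona :: "nat \<Rightarrow> nat \<Rightarrow> (nat, nat) corona_vertex graph" where
  "K_corona m n \<equiv> edge_corona (complete_graph m) (complete_graph n)"

lemma K_corona_vertex_cases [consumes 1, case_names Inl Inr]: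
  assumes "v \<in> verts (K_corona m n)"
  obtains (Inl) a where "v = Inl a" "a < m"
    | (Inr) e y where "v = Inr (e, y)" "e \<in> edges (complete_graph m)" "y < n"
  using assms by (cases v) auto

lemma closed_nbhd_K_corona_Inl:
  assumes "a < m"
  shows "closed_nbhd (K_corona m n) (Inl a) =
    Inl ` {0..<m} \<union> {Inr (e, y) | e y. e \<in> edges (complete_graph m) \<and> a \<in> e \<and> y < n}"
proof (intro set_eqI)
  fix x show "x \<in> closed_nbhd (K_corona m n) (Inl a) \<longleftrightarrow>
    x \<in> Inl ` {0..<m} \<union> {Inr (e, y) | e y. e \<in> edges (complete_graph m) \<and> a \<in> e \<and> y < n}"
    using assms by (cases x) (auto simp: closed_nbhd_def)
qed

lemma closed_nbhd_K_corona_Inr: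
  assumes "e \<in> edges (complete_graph m)" and "y < n"
  shows "closed_nbhd (K_corona m n) (Inr (e, y)) = Inl ` e \<union> (\<lambda>z. Inr (e, z)) ` {0..<n}"
proof (intro set_eqI)
  fix x show "x \<in> closed_nbhd (K_corona m n) (Inr (e, y)) \<longleftrightarrow>
    x \<in> Inl ` e \<union> (\<lambda>z. Inr (e, z)) ` {0..<n}"
    using assms edge_complete_graph_lessD[OF assms(1)] by (cases x) (auto simp: closed_nbhd_def)
qed

lemma closed_nbhd2_K_corona_Inl:
  assumes a: "a < m"
  shows "closed_nbhd2 (K_corona m n) (Inl a) = verts (K_corona m n)"
proof (intro equalityI subsetI)
  fix x assume "x \<in> closed_nbhd2 (K_corona m n) (Inl a)"
  then show "x \<in> verts (K_corona m n)" by (auto simp: closed_nbhd2_def closed_nbhd_def)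
next
  fix x assume x: "x \<in> verts (K_corona m n)"
  obtain b where "b < m" "x \<in> closed_nbhd (K_corona m n) (Inl b)"
    using x
  proof (cases rule: K_corona_vertex_cases)
    case (Inl b)
    then show ?thesis using that by (simp add: closed_nbhd_K_corona_Inl)
  next
    case (Inr e y)
    moreover obtain b where "b \<in> e" using edge_complete_graph_nonempty[OF \<open>e \<in> _\<close>] by blast
    ultimately show ?thesis
      using that edge_complete_graph_lessD by (auto simp: closed_nbhd_K_corona_Inl)
  qed
  moreover have "Inl b \<in> closed_nbhd (K_corona m n) (Inl a)"
    using a \<open>b < m\<close> by (simp add: closed_nbhd_K_corona_Inl)
  ultimately show "x \<in> closed_nbhd2 (K_corona m n) (Inl a)"
    unfolding closed_nbhd2_def by blast
qed

lemma closed_nbhd2_K_corona_Inr: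
  assumes e: "e \<in> edges (complete_graph m)" and y: "y < n"
  shows "closed_nbhd2 (K_corona m n) (Inr (e, y)) = (\<Union>a\<in>e. closed_nbhd (K_corona m n) (Inl a))"
proof -
  have sub: "closed_nbhd (K_corona m n) (Inr (e, z)) \<subseteq> closed_nbhd (K_corona m n) (Inl a)"
    if "a \<in> e" "z < n" for a z
    using that e edge_complete_graph_lessD[OF e]
    by (auto simp: closed_nbhd_K_corona_Inr closed_nbhd_K_corona_Inl)
  obtain a0 where "a0 \<in> e" using edge_complete_graph_nonempty[OF e] by blast
  show ?thesis
  proof (intro equalityI subsetI)
    fix x assume "x \<in> closed_nbhd2 (K_corona m n) (Inr (e, y))"
    then obtain w where w: "w \<in> Inl ` e \<union> (\<lambda>z. Inr (e, z)) ` {0..<n}"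
        "x \<in> closed_nbhd (K_corona m n) w"
      unfolding closed_nbhd2_def closed_nbhd_K_corona_Inr[OF e y] by blast
    from w(1) consider a where "a \<in> e" "w = Inl a" | z where "z < n" "w = Inr (e, z)" by auto
    then show "x \<in> (\<Union>a\<in>e. closed_nbhd (K_corona m n) (Inl a))"
    proof cases
      case 1
      then show ?thesis using w(2) by blast
    next
      case 2
      then show ?thesis using w(2) sub[OF \<open>a0 \<in> e\<close>] \<open>a0 \<in> e\<close> by blast
    qed
  next
    fix x assume "x \<in> (\<Union>a\<in>e. closed_nbhd (K_corona m n) (Inl a))"
    then obtain a where "a \<in> e" "x \<in> closed_nbhd (K_corona m n) (Inl a)" by blast
    moreover have "Inl a \<in> closed_nbhd (K_corona m n) (Inr (e, y))"
      using \<open>a \<in> e\<close> by (simp add: closed_nbhd_K_corona_Inr[OF e y])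
    ultimately show "x \<in> closed_nbhd2 (K_corona m n) (Inr (e, y))"
      unfolding closed_nbhd2_def by blast
  qed
qed

lemma K_corona_Inl_in_closed_nbhd:
  assumes v: "v \<in> verts (K_corona m n)"
  shows "\<exists>a<m. Inl a \<in> closed_nbhd (K_corona m n) v"
  using v
proof (cases rule: K_corona_vertex_cases)
  case (Inl a)
  then show ?thesis by (auto simp: closed_nbhd_K_corona_Inl)
next
  case (Inr e y)
  moreover obtain a where "a \<in> e" using edge_complete_graph_nonempty[OF \<open>e \<in> _\<close>] by blast
  ultimately show ?thesis
    using edge_complete_graph_lessD[OF \<open>e \<in> _\<close>] by (auto simp: closed_nbhd_K_corona_Inr)
qed

lemma K_corona_short_paths:
  assumes u: "u \<in> verts (K_corona m n)" and v: "v \<in> verts (K_corona m n)"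
  shows "\<exists>p. is_path (K_corona m n) u v p \<and>
    (length p \<le> 3 \<or> (\<exists>a b. a \<noteq> b \<and> p = [u, Inl a, Inl b, v]))"
proof (cases "v \<in> closed_nbhd2 (K_corona m n) u")
  case True
  then show ?thesis using path_within_nbhd2[OF u] by blast
next
  case False
  obtain a where a: "a < m" "Inl a \<in> closed_nbhd (K_corona m n) u"
    using K_corona_Inl_in_closed_nbhd[OF u] by blast
  obtain b where b: "b < m" "Inl b \<in> closed_nbhd (K_corona m n) v"
    using K_corona_Inl_in_closed_nbhd[OF v] by blast
  have "v \<in> closed_nbhd (K_corona m n) (Inl b)" using closed_nbhd_sym[OF _ v] b by simp
  then have "a \<noteq> b" using False a(2) unfolding closed_nbhd2_def by blast
  then have "is_path (K_corona m n) u v [u, Inl a, Inl b, v]"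
    using a b False by (intro path_through_edge[OF u v]) simp_all
  then show ?thesis using \<open>a \<noteq> b\<close> by blast
qed

lemma diameter_le_3_K_corona: "diameter_le (K_corona m n) 3"
  unfolding diameter_le_def using K_corona_short_paths by fastforce

lemma K_corona_rainbow_paths:
  assumes inj: "inj_on c (Inl ` {0..<m})"
    and u: "u \<in> verts (K_corona m n)" and v: "v \<in> verts (K_corona m n)"
  shows "\<exists>p. is_path (K_corona m n) u v p \<and> distinct (map c (butlast (tl p)))"
proof -
  obtain p where p: "is_path (K_corona m n) u v p"
    and short: "length p \<le> 3 \<or> (\<exists>a b. a \<noteq> b \<and> p = [u, Inl a, Inl b, v])"
    using K_corona_short_paths[OF u v] by blast
  have "distinct (map c (butlast (tl p)))"
  proof (cases "length p \<le> 3")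
    case True
    then have "length (butlast (tl p)) \<le> 1" by simp
    then show ?thesis by (cases "butlast (tl p)") auto
  next
    case False
    then obtain a b where "a \<noteq> b" "p = [u, Inl a, Inl b, v]" using short by blast
    moreover have "Inl a \<in> verts (K_corona m n)" "Inl b \<in> verts (K_corona m n)"
      using p \<open>p = _\<close> by (auto simp: is_path_def)
    ultimately show ?thesis using inj by (auto simp: inj_on_def)
  qed
  then show ?thesis using p by blast
qed

section \<open>Locating colourings from prescribed missing colours\<close>

definition corona_coloring ::
    "(nat \<Rightarrow> nat) \<Rightarrow> (nat set \<Rightarrow> nat set) \<Rightarrow> nat \<Rightarrow> (nat, nat) corona_vertex \<Rightarrow> nat" where
  "corona_coloring \<kappa> P k v =
    (case v of Inl x \<Rightarrow> \<kappa> x | Inr (e, y) \<Rightarrow> sorted_list_of_set ({1..k} - P e) ! y)"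

lemma corona_coloring_Inl [simp]: "corona_coloring \<kappa> P k (Inl x) = \<kappa> x"
  by (simp add: corona_coloring_def)

lemma corona_coloring_copy:
  assumes "card ({1..k} - P e) = n"
  shows "bij_betw (\<lambda>y. corona_coloring \<kappa> P k (Inr (e, y))) {0..<n} ({1..k} - P e)"
proof -
  define xs where "xs = sorted_list_of_set ({1..k} - P e)"
  have "bij_betw ((!) xs) {0..<n} ({1..k} - P e)"
    using assms by (intro bij_betw_nth) (auto simp: xs_def)
  then show ?thesis by (simp add: corona_coloring_def xs_def)
qed

locale corona_coloring_data =
  fixes m n k :: nat and \<kappa> :: "nat \<Rightarrow> nat" and P :: "nat set \<Rightarrow> nat set"
  assumes \<kappa>_inj: "inj_on \<kappa> {0..<m}" and \<kappa>_range: "\<kappa> ` {0..<m} \<subseteq> {1..k}"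
    and P_range: "\<And>e. e \<in> edges (complete_graph m) \<Longrightarrow> P e \<subseteq> {1..k}"
    and P_card: "\<And>e. e \<in> edges (complete_graph m) \<Longrightarrow> card ({1..k} - P e) = n"
begin

abbreviation col :: "(nat, nat) corona_vertex \<Rightarrow> nat" where
  "col \<equiv> corona_coloring \<kappa> P k"

lemma copy_bij:
  "e \<in> edges (complete_graph m) \<Longrightarrow> bij_betw (\<lambda>y. col (Inr (e, y))) {0..<n} ({1..k} - P e)"
  using P_card by (rule corona_coloring_copy)

lemma col_range:
  assumes "v \<in> verts (K_corona m n)" shows "col v \<in> {1..k}"
  using assms
proof (cases rule: K_corona_vertex_cases)
  case (Inl a)
  then show ?thesis using \<kappa>_range by (auto simp: image_subset_iff)
next
  case (Inr e y)
  then have "col v \<in> {1..k} - P e" using bij_betwE[OF copy_bij[OF Inr(2)]] by simp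
  then show ?thesis by blast
qed

lemma nbhd_colors_Inl:
  assumes x: "x < m"
    and cover: "\<And>l. l \<in> {1..k} - \<kappa> ` {0..<m} \<Longrightarrow> \<exists>e\<in>edges (complete_graph m). x \<in> e \<and> l \<notin> P e"
  shows "col ` closed_nbhd (K_corona m n) (Inl x) = {1..k}"
proof (intro equalityI subsetI)
  fix l assume "l \<in> col ` closed_nbhd (K_corona m n) (Inl x)"
  then obtain w where w: "w \<in> closed_nbhd (K_corona m n) (Inl x)" "l = col w" by (rule imageE)
  from closed_nbhd_subset_verts w(1) have "w \<in> verts (K_corona m n)" by (rule subsetD)
  then show "l \<in> {1..k}" using col_range w(2) by simp
next
  fix l assume l: "l \<in> {1..k}"
  show "l \<in> col ` closed_nbhd (K_corona m n) (Inl x)"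
  proof (cases "l \<in> \<kappa> ` {0..<m}")
    case True
    then obtain a where a: "a < m" "l = col (Inl a)" by auto
    have "Inl a \<in> closed_nbhd (K_corona m n) (Inl x)"
      using x a(1) by (simp add: closed_nbhd_K_corona_Inl)
    from rev_image_eqI[of _ _ l col, OF this a(2)] show ?thesis .
  next
    case False
    then obtain e where e: "e \<in> edges (complete_graph m)" "x \<in> e" "l \<in> {1..k} - P e"
      using cover l by blast
    then have "l \<in> (\<lambda>y. col (Inr (e, y))) ` {0..<n}"
      using bij_betw_imp_surj_on[OF copy_bij[OF e(1)]] by simp
    then obtain y where y: "y < n" "l = col (Inr (e, y))" by auto
    have "Inr (e, y) \<in> closed_nbhd (K_corona m n) (Inl x)"
      using x e y(1) by (simp add: closed_nbhd_K_corona_Inl)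
    from rev_image_eqI[of _ _ l col, OF this y(2)] show ?thesis .
  qed
qed

lemma nbhd_colors_Inr:
  assumes e: "e \<in> edges (complete_graph m)" and y: "y < n"
  shows "col ` closed_nbhd (K_corona m n) (Inr (e, y)) = {1..k} - (P e - \<kappa> ` e)"
proof -
  have "col ` Inl ` e = \<kappa> ` e" by (simp add: image_image)
  moreover have "col ` (\<lambda>z. Inr (e, z)) ` {0..<n} = {1..k} - P e"
    using bij_betw_imp_surj_on[OF copy_bij[OF e]] by (simp add: image_image)
  ultimately have "col ` closed_nbhd (K_corona m n) (Inr (e, y)) = \<kappa> ` e \<union> ({1..k} - P e)"
    by (simp add: closed_nbhd_K_corona_Inr[OF e y] image_Un)
  moreover have "\<kappa> ` e \<subseteq> {1..k}" using \<kappa>_range edge_complete_graph_lessD[OF e] by auto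
  ultimately show ?thesis using P_range[OF e] by auto
qed

text \<open>By \<open>cover\<close>, every vertex \<open>Inl x\<close> sees all \<open>k\<close> colours, while the vertices of the copy
  of \<open>e\<close> see all colours except those in \<open>P e - \<kappa> ` e\<close>; so a vertex is determined by its
  colour together with the colours it sees.\<close>

lemma locating_coloring:
  assumes missing_ne: "\<And>e. e \<in> edges (complete_graph m) \<Longrightarrow> P e - \<kappa> ` e \<noteq> {}"
    and missing_inj: "inj_on (\<lambda>e. P e - \<kappa> ` e) (edges (complete_graph m))"
    and cover: "\<And>x l. x < m \<Longrightarrow> l \<in> {1..k} - \<kappa> ` {0..<m} \<Longrightarrow>
      \<exists>e\<in>edges (complete_graph m). x \<in> e \<and> l \<notin> P e"
  shows "locating_rainbow_coloring (K_corona m n) k col"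
proof -
  let ?M = "\<lambda>e. P e - \<kappa> ` e"
  have full_ne: "{1..k} \<noteq> {1..k} - ?M e" if "e \<in> edges (complete_graph m)" for e
    using missing_ne[OF that] P_range[OF that] by blast
  have inj: "inj_on (\<lambda>v. (col v, col ` closed_nbhd (K_corona m n) v)) (verts (K_corona m n))"
  proof (rule inj_onI)
    fix u v
    assume u: "u \<in> verts (K_corona m n)" and v: "v \<in> verts (K_corona m n)"
      and eq: "(col u, col ` closed_nbhd (K_corona m n) u) =
        (col v, col ` closed_nbhd (K_corona m n) v)"
    note nbhd = nbhd_colors_Inl[OF _ cover] nbhd_colors_Inr
    from u v show "u = v"
    proof (cases rule: K_corona_vertex_cases[case_product K_corona_vertex_cases])
      case (Inl_Inl a b)
      then show ?thesis using eq \<kappa>_inj by (auto simp: inj_on_def)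
    next
      case (Inl_Inr a f z)
      then have "{1..k} = {1..k} - ?M f" using eq nbhd by simp
      then show ?thesis using full_ne Inl_Inr(4) by blast
    next
      case (Inr_Inl e y b)
      then have "{1..k} - ?M e = {1..k}" using eq nbhd by simp
      then show ?thesis using full_ne Inr_Inl(2) by metis
    next
      case (Inr_Inr e y f z)
      then have "{1..k} - ?M e = {1..k} - ?M f" using eq nbhd by auto
      moreover have "?M e \<subseteq> {1..k}" "?M f \<subseteq> {1..k}" using P_range Inr_Inr by auto
      ultimately have "?M e = ?M f" by blast
      then have "e = f" using missing_inj Inr_Inr by (auto dest: inj_onD)
      then have "col (Inr (e, y)) = col (Inr (e, z))" using Inr_Inr eq by simp
      then have "y = z"
        using bij_betw_imp_inj_on[OF copy_bij[OF Inr_Inr(2)]] Inr_Inr by (auto dest: inj_onD)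
      then show ?thesis using Inr_Inr \<open>e = f\<close> by simp
    qed
  qed
  have "inj_on col (Inl ` {0..<m})" using \<kappa>_inj by (auto simp: inj_on_def)
  then show ?thesis
    unfolding locating_rainbow_coloring_def rainbow_vertex_coloring_def
    using col_range inj_on_rainbow_code[OF diameter_le_3_K_corona _ inj] K_corona_rainbow_paths
    by blast
qed

end

section \<open>Lower bounds\<close>

locale locating_K_corona =
  fixes m n k :: nat and c :: "(nat, nat) corona_vertex \<Rightarrow> nat"
  assumes locating: "locating_rainbow_coloring (K_corona m n) k c"
begin

abbreviation V :: "(nat, nat) corona_vertex set" where "V \<equiv> verts (K_corona m n)"
abbreviation N :: "(nat, nat) corona_vertex \<Rightarrow> (nat, nat) corona_vertex set" where
  "N \<equiv> closed_nbhd (K_corona m n)"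
abbreviation N2 :: "(nat, nat) corona_vertex \<Rightarrow> (nat, nat) corona_vertex set" where
  "N2 \<equiv> closed_nbhd2 (K_corona m n)"

lemma color_range: "v \<in> V \<Longrightarrow> c v \<in> {1..k}"
  using locating unfolding locating_rainbow_coloring_def rainbow_vertex_coloring_def by blast

lemma eq_if_same_colors:
  assumes uv: "u \<in> V" "v \<in> V" and "c u = c v"
    and "\<And>i. i \<in> {1..k} \<Longrightarrow> i \<in> c ` N u \<longleftrightarrow> i \<in> c ` N v"
    and "\<And>i. i \<in> {1..k} \<Longrightarrow> i \<in> c ` N2 u \<longleftrightarrow> i \<in> c ` N2 v"
  shows "u = v"
proof -
  have "rainbow_code (K_corona m n) k c u = rainbow_code (K_corona m n) k c v"
    using diameter_le_3_K_corona uv assms(3-5) by (rule rainbow_code_eqI)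
  then show ?thesis
    using locating uv unfolding locating_rainbow_coloring_def by (auto dest: inj_onD)
qed

lemma eq_if_full_nbhds:
  assumes uv: "u \<in> V" "v \<in> V" "c u = c v" and "{1..k} \<subseteq> c ` N u" "{1..k} \<subseteq> c ` N v"
  shows "u = v"
proof -
  have "{1..k} \<subseteq> c ` N2 u" "{1..k} \<subseteq> c ` N2 v"
    using assms(4,5) closed_nbhd_subset_nbhd2[OF uv(1)] closed_nbhd_subset_nbhd2[OF uv(2)] by blast+
  with assms show ?thesis by (intro eq_if_same_colors) blast+
qed

lemma nbhd_colors_subset_nbhd2: "v \<in> V \<Longrightarrow> c ` N v \<subseteq> c ` N2 v"
  by (intro image_mono closed_nbhd_subset_nbhd2)

definition copy_colors :: "nat set \<Rightarrow> nat set" where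
  "copy_colors e = (\<lambda>y. c (Inr (e, y))) ` {0..<n}"

lemma copy_colors_subset: "e \<in> edges (complete_graph m) \<Longrightarrow> copy_colors e \<subseteq> {1..k}"
  unfolding copy_colors_def using color_range by auto

lemma card_copy_colors:
  assumes e: "e \<in> edges (complete_graph m)"
  shows "card (copy_colors e) = n"
proof -
  have "y = z" if "y < n" "z < n" "c (Inr (e, y)) = c (Inr (e, z))" for y z
  proof -
    have nbhds: "N (Inr (e, y)) = N (Inr (e, z))" "N2 (Inr (e, y)) = N2 (Inr (e, z))"
      using that e by (simp_all add: closed_nbhd_K_corona_Inr closed_nbhd2_K_corona_Inr)
    have "(Inr (e, y) :: (nat, nat) corona_vertex) = Inr (e, z)"
      by (rule eq_if_same_colors) (use that e nbhds in simp_all)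
    then show ?thesis by simp
  qed
  then have "inj_on (\<lambda>y. c (Inr (e, y))) {0..<n}" by (auto intro: inj_onI)
  then show ?thesis unfolding copy_colors_def by (simp add: card_image)
qed

lemma mem_copy_colorsE:
  assumes "l \<in> copy_colors e"
  obtains y where "y < n" "c (Inr (e, y)) = l"
  using assms unfolding copy_colors_def by auto

lemma copy_colors_subset_nbhd:
  assumes e: "e \<in> edges (complete_graph m)"
    and w: "(\<exists>a\<in>e. w = Inl a) \<or> (\<exists>z<n. w = Inr (e, z))"
  shows "copy_colors e \<subseteq> c ` N w"
proof -
  have "(\<lambda>y. Inr (e, y)) ` {0..<n} \<subseteq> N w"
    using w e edge_complete_graph_lessD[OF e]
    by (auto simp: closed_nbhd_K_corona_Inl closed_nbhd_K_corona_Inr)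
  then show ?thesis unfolding copy_colors_def by (auto simp: image_image)
qed

lemma n_le_k: "e \<in> edges (complete_graph m) \<Longrightarrow> n \<le> k"
  using card_mono[OF finite_atLeastAtMost copy_colors_subset] card_copy_colors by fastforce

lemma n_less_k:
  assumes "3 \<le> m"
  shows "n < k"
proof (rule ccontr)
  assume "\<not> n < k"
  have e1: "{0, 1} \<in> edges (complete_graph m)" and e2: "{0, 2} \<in> edges (complete_graph m)"
    using assms by simp_all
  then have "k = n" using n_le_k \<open>\<not> n < k\<close> by fastforce
  have full: "copy_colors e = {1..k}" if "e \<in> edges (complete_graph m)" for e
    using copy_colors_subset[OF that] card_copy_colors[OF that] \<open>k = n\<close>
    by (intro card_subset_eq) simp_all
  have "1 \<in> {1..k}"
  proof (rule ccontr)
    assume "1 \<notin> {1..k}"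
    then show False using color_range[of "Inl 0"] assms by simp
  qed
  then obtain y1 y2 where y: "y1 < n" "c (Inr ({0, 1}, y1)) = 1" "y2 < n" "c (Inr ({0, 2}, y2)) = 1"
    using full[OF e1] full[OF e2] by (metis mem_copy_colorsE)
  have "{1..k} \<subseteq> c ` N (Inr ({0, 1}, y1))"
    using copy_colors_subset_nbhd[OF e1, of "Inr ({0, 1}, y1)"] full[OF e1] y(1) by simp
  moreover have "{1..k} \<subseteq> c ` N (Inr ({0, 2}, y2))"
    using copy_colors_subset_nbhd[OF e2, of "Inr ({0, 2}, y2)"] full[OF e2] y(3) by simp
  ultimately have "(Inr ({0, 1}, y1) :: (nat, nat) corona_vertex) = Inr ({0, 2}, y2)"
    using y e1 e2 by (intro eq_if_full_nbhds) simp_all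
  then show False by (simp add: doubleton_eq_iff)
qed

end

locale locating_K_corona_tight = locating_K_corona +
  assumes k_eq: "k = Suc n"
begin

definition missing_color :: "nat set \<Rightarrow> nat" where
  "missing_color e = (THE s. {1..k} - copy_colors e = {s})"

lemma missing_color: "e \<in> edges (complete_graph m) \<Longrightarrow> {1..k} - copy_colors e = {missing_color e}"
proof -
  assume e: "e \<in> edges (complete_graph m)"
  have "card ({1..k} - copy_colors e) = 1"
    using card_Diff_subset[OF _ copy_colors_subset[OF e]] card_copy_colors[OF e] k_eq
    by (simp add: copy_colors_def)
  then obtain s where "{1..k} - copy_colors e = {s}" by (rule card_1_singletonE)
  then show ?thesis unfolding missing_color_def by simp
qed

lemma copy_colors_eq:
  "e \<in> edges (complete_graph m) \<Longrightarrow> copy_colors e = {1..k} - {missing_color e}"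
  using missing_color copy_colors_subset by blast

lemma missing_color_range: "e \<in> edges (complete_graph m) \<Longrightarrow> missing_color e \<in> {1..k}"
  using missing_color by blast

lemma end_color_ne_missing_color:
  assumes e: "e \<in> edges (complete_graph m)" and a: "a \<in> e"
  shows "c (Inl a) \<noteq> missing_color e"
proof
  assume ca: "c (Inl a) = missing_color e"
  obtain b where b: "b \<in> e" "b \<noteq> a" using edge_complete_graph_other_end[OF e a] by blast
  have am: "a < m" and bm: "b < m" using edge_complete_graph_lessD[OF e] a b by auto
  have full: "{1..k} \<subseteq> c ` N w"
    if w: "(\<exists>a\<in>e. w = Inl a) \<or> (\<exists>z<n. w = Inr (e, z))" for w
  proof -
    have "Inl a \<in> N w"
      using w e a am edge_complete_graph_lessD[OF e]
      by (auto simp: closed_nbhd_K_corona_Inl closed_nbhd_K_corona_Inr)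
    then have "missing_color e \<in> c ` N w" using ca by (metis imageI)
    then show ?thesis using copy_colors_subset_nbhd[OF e w] copy_colors_eq[OF e] by blast
  qed
  show False
  proof (cases "c (Inl b) = missing_color e")
    case True
    then have "(Inl a :: (nat, nat) corona_vertex) = Inl b"
      using am bm ca full a b by (intro eq_if_full_nbhds) auto
    then show False using b by simp
  next
    case False
    then have "c (Inl b) \<in> copy_colors e"
      using copy_colors_eq[OF e] color_range[of "Inl b"] bm by simp
    then obtain z where z: "z < n" "c (Inr (e, z)) = c (Inl b)" by (rule mem_copy_colorsE)
    then have "(Inl b :: (nat, nat) corona_vertex) = Inr (e, z)"
      using bm e full b by (intro eq_if_full_nbhds) auto
    then show False by simp
  qed
qed

lemma nbhd_colors_copy:
  assumes e: "e \<in> edges (complete_graph m)" and y: "y < n"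
  shows "c ` N (Inr (e, y)) = {1..k} - {missing_color e}"
proof -
  have "c ` N (Inr (e, y)) = (\<lambda>a. c (Inl a)) ` e \<union> copy_colors e"
    unfolding closed_nbhd_K_corona_Inr[OF e y] copy_colors_def image_Un image_image ..
  moreover have "(\<lambda>a. c (Inl a)) ` e \<subseteq> {1..k} - {missing_color e}"
  proof (rule image_subsetI)
    fix a assume "a \<in> e"
    then show "c (Inl a) \<in> {1..k} - {missing_color e}"
      using end_color_ne_missing_color[OF e] color_range edge_complete_graph_lessD[OF e] by simp
  qed
  ultimately show ?thesis using copy_colors_eq[OF e] by (simp add: Un_absorb1)
qed

lemma nbhd_colors_end:
  "f \<in> edges (complete_graph m) \<Longrightarrow> a \<in> f \<Longrightarrow> {1..k} - {missing_color f} \<subseteq> c ` N (Inl a)"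
  using copy_colors_subset_nbhd[of f "Inl a"] copy_colors_eq by simp

lemma nbhd2_colors_copy:
  assumes e: "e \<in> edges (complete_graph m)" and y: "y < n"
  shows "{1..k} - {missing_color e} \<subseteq> c ` N2 (Inr (e, y))"
  using nbhd_colors_copy[OF e y] nbhd_colors_subset_nbhd2[of "Inr (e, y)"] e y by simp

lemma eq_if_colors_agree_except:
  assumes uv: "u \<in> V" "v \<in> V" "c u = c v" and "c ` N u \<inter> {1..k} = c ` N v \<inter> {1..k}"
    and "{1..k} - {j} \<subseteq> c ` N2 u" "{1..k} - {j} \<subseteq> c ` N2 v"
    and "j \<in> c ` N2 u \<longleftrightarrow> j \<in> c ` N2 v"
  shows "u = v"
proof (rule eq_if_same_colors[OF uv])
  show "i \<in> c ` N u \<longleftrightarrow> i \<in> c ` N v" if "i \<in> {1..k}" for i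
    using that assms(4) by blast
  show "i \<in> c ` N2 u \<longleftrightarrow> i \<in> c ` N2 v" if "i \<in> {1..k}" for i
  proof (cases "i = j")
    case False
    then show ?thesis using that assms(5,6) by (meson DiffI singletonD subsetD)
  qed (use assms(7) in simp)
qed

text \<open>Two copies missing the same colour \<open>j\<close> either both see \<open>j\<close> at distance two or both do
  not: otherwise an end \<open>a\<close> of the copy not seeing \<open>j\<close> would be indistinguishable from the vertex
  of colour \<open>c (Inl a)\<close> in the other copy.\<close>

lemma missing_color_in_nbhd2:
  assumes e: "e \<in> edges (complete_graph m)" and f: "f \<in> edges (complete_graph m)"
    and same: "missing_color e = missing_color f" and y: "y < n" and z: "z < n"
    and in_e: "missing_color e \<in> c ` N2 (Inr (e, y))"
  shows "missing_color e \<in> c ` N2 (Inr (f, z))"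
proof (rule ccontr)
  define j where "j = missing_color e"
  assume "missing_color e \<notin> c ` N2 (Inr (f, z))"
  then have not_in_f: "j \<notin> c ` N2 (Inr (f, z))" by (simp add: j_def)
  obtain a where a: "a \<in> f" using edge_complete_graph_nonempty[OF f] by blast
  have am: "a < m" using edge_complete_graph_lessD[OF f a] .
  have "c (Inl a) \<in> {1..k} - {j}"
    using end_color_ne_missing_color[OF f a] color_range[of "Inl a"] am same by (simp add: j_def)
  then have "c (Inl a) \<in> copy_colors e" using copy_colors_eq[OF e] by (simp add: j_def)
  then obtain ye where ye: "ye < n" "c (Inr (e, ye)) = c (Inl a)" by (rule mem_copy_colorsE)
  have "(Inl a :: (nat, nat) corona_vertex) = Inr (e, ye)"
  proof (rule eq_if_colors_agree_except)
    show "Inl a \<in> V" "Inr (e, ye) \<in> V" "c (Inl a) = c (Inr (e, ye))" using am e ye by simp_all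
    have "c ` N (Inl a) \<subseteq> c ` N2 (Inr (f, z))"
      using a by (intro image_mono) (auto simp: closed_nbhd2_K_corona_Inr[OF f z])
    then have "j \<notin> c ` N (Inl a)" using not_in_f by (meson subsetD)
    moreover have sub_a: "{1..k} - {j} \<subseteq> c ` N (Inl a)"
      using nbhd_colors_end[OF f a] same by (simp add: j_def)
    ultimately have "c ` N (Inl a) \<inter> {1..k} = {1..k} - {j}" by blast
    also have "\<dots> = c ` N (Inr (e, ye)) \<inter> {1..k}"
      using nbhd_colors_copy[OF e ye(1)] by (auto simp: j_def)
    finally show "c ` N (Inl a) \<inter> {1..k} = c ` N (Inr (e, ye)) \<inter> {1..k}" .
    show "{1..k} - {j} \<subseteq> c ` N2 (Inl a)"
      using sub_a nbhd_colors_subset_nbhd2[of "Inl a"] am by simp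
    show "{1..k} - {j} \<subseteq> c ` N2 (Inr (e, ye))"
      using nbhd2_colors_copy[OF e ye(1)] by (simp add: j_def)
    have "c ` N2 (Inr (e, y)) \<subseteq> c ` N2 (Inl a)"
      unfolding closed_nbhd2_K_corona_Inl[OF am] by (intro image_mono closed_nbhd2_subset_verts)
    moreover have "N2 (Inr (e, ye)) = N2 (Inr (e, y))"
      using e y ye(1) by (simp add: closed_nbhd2_K_corona_Inr)
    ultimately show "j \<in> c ` N2 (Inl a) \<longleftrightarrow> j \<in> c ` N2 (Inr (e, ye))"
      using in_e unfolding j_def by auto
  qed
  then show False by simp
qed

lemma inj_on_missing_color:
  assumes "0 < n"
  shows "inj_on missing_color (edges (complete_graph m))"
proof (rule inj_onI)
  fix e f assume e: "e \<in> edges (complete_graph m)" and f: "f \<in> edges (complete_graph m)"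
    and same: "missing_color e = missing_color f"
  define j where "j = missing_color e"
  obtain i where "i \<in> {1..k} - {j}"
  proof
    show "(if j = 1 then 2 else 1) \<in> {1..k} - {j}" using assms k_eq by auto
  qed
  then have "i \<in> copy_colors e" "i \<in> copy_colors f"
    using copy_colors_eq[OF e] copy_colors_eq[OF f] same by (simp_all add: j_def)
  obtain ye where ye: "ye < n" "c (Inr (e, ye)) = i"
    using \<open>i \<in> copy_colors e\<close> by (rule mem_copy_colorsE)
  obtain yf where yf: "yf < n" "c (Inr (f, yf)) = i"
    using \<open>i \<in> copy_colors f\<close> by (rule mem_copy_colorsE)
  have "j \<in> c ` N2 (Inr (e, ye)) \<longleftrightarrow> j \<in> c ` N2 (Inr (f, yf))"
    using missing_color_in_nbhd2[OF e f same ye(1) yf(1)]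
      missing_color_in_nbhd2[OF f e same[symmetric] yf(1) ye(1)] same by (auto simp: j_def)
  then have "(Inr (e, ye) :: (nat, nat) corona_vertex) = Inr (f, yf)"
    using eq_if_colors_agree_except[of "Inr (e, ye)" "Inr (f, yf)" j] e f ye yf same
      nbhd_colors_copy[OF e ye(1)] nbhd_colors_copy[OF f yf(1)]
      nbhd2_colors_copy[OF e ye(1)] nbhd2_colors_copy[OF f yf(1)]
    by (simp add: j_def)
  then show "e = f" by simp
qed

lemma card_edges_le:
  assumes "0 < n"
  shows "card (edges (complete_graph m)) \<le> Suc n"
proof -
  have "missing_color ` edges (complete_graph m) \<subseteq> {1..k}" using missing_color_range by blast
  from card_inj_on_le[OF inj_on_missing_color[OF assms] this finite_atLeastAtMost]
  show ?thesis using k_eq by simp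
qed

end

section \<open>Constructions\<close>

definition cyclic_succ :: "nat \<Rightarrow> nat \<Rightarrow> nat" where
  "cyclic_succ m x = Suc x mod m"

lemma cyclic_succ_eq:
  assumes "x < m" shows "cyclic_succ m x = (if Suc x < m then Suc x else 0)"
proof (cases "Suc x < m")
  case False
  then have "Suc x = m" using assms by simp
  then show ?thesis by (simp add: cyclic_succ_def)
qed (simp add: cyclic_succ_def)

lemma cyclic_succ_less: "x < m \<Longrightarrow> cyclic_succ m x < m"
  by (simp add: cyclic_succ_eq)

lemma cyclic_succ_inj: "x < m \<Longrightarrow> y < m \<Longrightarrow> cyclic_succ m x = cyclic_succ m y \<longleftrightarrow> x = y"
  by (auto simp: cyclic_succ_eq split: if_splits)

lemma cyclic_succ_ne: "2 \<le> m \<Longrightarrow> x < m \<Longrightarrow> cyclic_succ m x \<noteq> x"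
  by (auto simp: cyclic_succ_eq)

lemma cyclic_succ2_ne: "3 \<le> m \<Longrightarrow> x < m \<Longrightarrow> cyclic_succ m (cyclic_succ m x) \<noteq> x"
  by (auto simp: cyclic_succ_eq)

lemma cyclic_succ3_ne:
  "4 \<le> m \<Longrightarrow> x < m \<Longrightarrow> cyclic_succ m (cyclic_succ m (cyclic_succ m x)) \<noteq> x"
  by (auto simp: cyclic_succ_eq)

definition opposite_edge :: "nat \<Rightarrow> nat \<Rightarrow> nat set" where
  "opposite_edge m x = {cyclic_succ m x, cyclic_succ m (cyclic_succ m x)}"

lemma opposite_edge:
  assumes "3 \<le> m" "x < m"
  shows "opposite_edge m x \<in> edges (complete_graph m)" "x \<notin> opposite_edge m x"
  using assms cyclic_succ_less[of x m] cyclic_succ_less[of "cyclic_succ m x" m]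
    cyclic_succ_ne[of m "cyclic_succ m x"] cyclic_succ_ne[of m x] cyclic_succ2_ne[of m x]
  by (auto simp: opposite_edge_def)

lemma inj_on_opposite_edge:
  assumes m: "3 \<le> m" shows "inj_on (opposite_edge m) {0..<m}"
proof (rule inj_onI)
  define s where "s = cyclic_succ m"
  fix a b assume "a \<in> {0..<m}" "b \<in> {0..<m}" "opposite_edge m a = opposite_edge m b"
  then have ab: "a < m" "b < m" and "s a = s b \<or> (s a = s (s b) \<and> s (s a) = s b)"
    by (auto simp: opposite_edge_def doubleton_eq_iff s_def)
  moreover have "s (s b) \<noteq> b" using m ab(2) cyclic_succ2_ne by (simp add: s_def)
  ultimately show "a = b" using cyclic_succ_inj cyclic_succ_less unfolding s_def by metis
qed

text \<open>With at most \<open>n + 1\<close> edges, give every edge \<open>e\<close> its own colour \<open>\<sigma> e\<close>, let the copy of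
  \<open>e\<close> use all other colours, and colour \<open>x\<close> with \<open>\<sigma>\<close> of the edge opposite to \<open>x\<close>, which
  does not contain \<open>x\<close>.\<close>

lemma locating_coloring_Suc_n:
  assumes m: "3 \<le> m" and few_edges: "card (edges (complete_graph m)) \<le> Suc n"
  shows "\<exists>c. locating_rainbow_coloring (K_corona m n) (Suc n) c"
proof -
  let ?E = "edges (complete_graph m)"
  obtain \<sigma> where \<sigma>_inj: "inj_on \<sigma> ?E" and \<sigma>_range: "\<sigma> ` ?E \<subseteq> {1..Suc n}"
    using card_le_inj[OF finite_edges_complete_graph finite_atLeastAtMost, of m 1 "Suc n"] few_edges
    by auto
  let ?\<kappa> = "\<sigma> \<circ> opposite_edge m"
  have \<sigma>_eq: "\<sigma> e = \<sigma> f \<longleftrightarrow> e = f" if "e \<in> ?E" "f \<in> ?E" for e f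
    using inj_on_eq_iff[OF \<sigma>_inj that] .
  have "opposite_edge m ` {0..<m} \<subseteq> ?E" using opposite_edge[OF m] by auto
  then have \<kappa>_inj: "inj_on ?\<kappa> {0..<m}"
    using comp_inj_on inj_on_opposite_edge[OF m] inj_on_subset[OF \<sigma>_inj] by blast
  have missing: "{\<sigma> e} - ?\<kappa> ` e = {\<sigma> e}" if e: "e \<in> ?E" for e
  proof -
    have "\<sigma> e \<noteq> \<sigma> (opposite_edge m a)" if "a \<in> e" for a
      using \<sigma>_eq[OF e] opposite_edge[OF m edge_complete_graph_lessD[OF e that]] that by metis
    then show ?thesis by auto
  qed
  interpret corona_coloring_data m n "Suc n" ?\<kappa> "\<lambda>e. {\<sigma> e}"
  proof unfold_locales
    show "?\<kappa> ` {0..<m} \<subseteq> {1..Suc n}" using \<sigma>_range opposite_edge[OF m] by auto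
    show "{\<sigma> e} \<subseteq> {1..Suc n}" "card ({1..Suc n} - {\<sigma> e}) = n" if "e \<in> ?E" for e
      using \<sigma>_range that by auto
  qed (fact \<kappa>_inj)
  have "locating_rainbow_coloring (K_corona m n) (Suc n) col"
  proof (rule locating_coloring)
    show "{\<sigma> e} - ?\<kappa> ` e \<noteq> {}" if "e \<in> ?E" for e using missing[OF that] by simp
    show "inj_on (\<lambda>e. {\<sigma> e} - ?\<kappa> ` e) ?E" using missing \<sigma>_inj by (simp add: inj_on_def)
    show "\<exists>e\<in>?E. x \<in> e \<and> l \<notin> {\<sigma> e}" if x: "x < m" for x l
    proof -
      define s where "s = cyclic_succ m"
      have "s x < m" "s (s x) < m" "s x \<noteq> x" "s (s x) \<noteq> x" "s (s x) \<noteq> s x"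
        using m x cyclic_succ_less cyclic_succ_ne[of m] cyclic_succ2_ne unfolding s_def
        by (simp_all add: cyclic_succ_less)
      then have "{x, s x} \<in> ?E" "{x, s (s x)} \<in> ?E" "{x, s x} \<noteq> {x, s (s x)}"
        using x by (auto simp: doubleton_eq_iff)
      then show ?thesis using \<sigma>_eq by (cases "l = \<sigma> {x, s x}") auto
    qed
  qed
  then show ?thesis by blast
qed

definition shift_edge :: "nat \<Rightarrow> nat set \<Rightarrow> nat set" where
  "shift_edge m e = cyclic_succ m ` e"

definition consecutive :: "nat \<Rightarrow> nat set \<Rightarrow> bool" where
  "consecutive m e \<longleftrightarrow> shift_edge m e \<inter> e \<noteq> {}"

definition shift_colors :: "nat \<Rightarrow> nat set \<Rightarrow> nat set" where
  "shift_colors m e = Suc ` (shift_edge m e - e) \<union> (if consecutive m e then {Suc m} else {})"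

lemma shift_edge_subset: "e \<in> edges (complete_graph m) \<Longrightarrow> shift_edge m e \<subseteq> {0..<m}"
  unfolding shift_edge_def using cyclic_succ_less edge_complete_graph_lessD by auto

lemma card_shift_edge:
  assumes "e \<in> edges (complete_graph m)"
  shows "card (shift_edge m e) = 2"
proof -
  obtain a b where "e = {a, b}" "a < m" "b < m" "a \<noteq> b"
    using assms by (auto simp: mem_edges_complete_graph)
  then show ?thesis by (simp add: shift_edge_def cyclic_succ_inj)
qed

lemma consecutive_edgeE:
  assumes m: "2 \<le> m" and e: "e \<in> edges (complete_graph m)" and "consecutive m e"
  obtains a where "a < m" "e = {a, cyclic_succ m a}"
proof -
  obtain a b where ab: "e = {a, b}" "a < m" "b < m" "a \<noteq> b"
    using e by (auto simp: mem_edges_complete_graph)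
  then have "cyclic_succ m a \<in> {a, b} \<or> cyclic_succ m b \<in> {a, b}"
    using \<open>consecutive m e\<close> by (auto simp: consecutive_def shift_edge_def)
  then have "cyclic_succ m a = b \<or> cyclic_succ m b = a"
    using cyclic_succ_ne[OF m ab(2)] cyclic_succ_ne[OF m ab(3)] by blast
  then show ?thesis using that ab by (auto simp: insert_commute)
qed

lemma shift_consecutive_edge:
  assumes "3 \<le> m" "a < m"
  shows "shift_edge m {a, cyclic_succ m a} - {a, cyclic_succ m a} =
    {cyclic_succ m (cyclic_succ m a)}"
  using assms cyclic_succ2_ne cyclic_succ_ne[of m "cyclic_succ m a"] cyclic_succ_less[of a m]
  by (auto simp: shift_edge_def)

lemma Suc_m_notin_shift: "e \<in> edges (complete_graph m) \<Longrightarrow> Suc m \<notin> Suc ` (shift_edge m e - e)"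
  using shift_edge_subset by fastforce

lemma card_shift_colors:
  assumes m: "3 \<le> m" and e: "e \<in> edges (complete_graph m)"
  shows "card (shift_colors m e) = 2"
proof (cases "consecutive m e")
  case True
  have "2 \<le> m" using m by simp
  then obtain a where a: "a < m" "e = {a, cyclic_succ m a}"
    using consecutive_edgeE[OF _ e True] by blast
  have "cyclic_succ m (cyclic_succ m a) < m" using a(1) by (simp add: cyclic_succ_less)
  then show ?thesis
    using True shift_consecutive_edge[OF m a(1)] a(2) by (simp add: shift_colors_def)
next
  case False
  then have "shift_edge m e - e = shift_edge m e" by (auto simp: consecutive_def)
  then show ?thesis
    using False card_shift_edge[OF e] by (simp add: shift_colors_def card_image)
qed

lemma shift_colors_subset:
  assumes "e \<in> edges (complete_graph m)" shows "shift_colors m e \<subseteq> {1..Suc m}"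
proof -
  have "shift_edge m e \<subseteq> {0..<m}" using shift_edge_subset[OF assms] .
  then show ?thesis by (auto simp: shift_colors_def)
qed

lemma shift_colors_disjoint:
  assumes "e \<in> edges (complete_graph m)" shows "shift_colors m e \<inter> Suc ` e = {}"
  using edge_complete_graph_lessD[OF assms] by (auto simp: shift_colors_def)

lemma Suc_m_in_shift_colors_iff:
  "e \<in> edges (complete_graph m) \<Longrightarrow> Suc m \<in> shift_colors m e \<longleftrightarrow> consecutive m e"
  using Suc_m_notin_shift by (auto simp: shift_colors_def)

lemma shift_colors_minus_Suc_m:
  "e \<in> edges (complete_graph m) \<Longrightarrow> shift_colors m e - {Suc m} = Suc ` (shift_edge m e - e)"
  using Suc_m_notin_shift by (auto simp: shift_colors_def)

lemma inj_on_shift_colors: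
  assumes m: "3 \<le> m"
  shows "inj_on (shift_colors m) (edges (complete_graph m))"
proof (rule inj_onI)
  fix e f
  assume e: "e \<in> edges (complete_graph m)" and f: "f \<in> edges (complete_graph m)"
    and eq: "shift_colors m e = shift_colors m f"
  have cons: "consecutive m e \<longleftrightarrow> consecutive m f"
    using eq Suc_m_in_shift_colors_iff[OF e] Suc_m_in_shift_colors_iff[OF f] by simp
  have "Suc ` (shift_edge m e - e) = Suc ` (shift_edge m f - f)"
    using eq shift_colors_minus_Suc_m[OF e] shift_colors_minus_Suc_m[OF f] by simp
  then have diff: "shift_edge m e - e = shift_edge m f - f" by (simp add: inj_image_eq_iff)
  show "e = f"
  proof (cases "consecutive m e")
    case True
    have m2: "2 \<le> m" using m by simp
    obtain a where a: "a < m" "e = {a, cyclic_succ m a}" using consecutive_edgeE[OF m2 e True] .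
    obtain b where b: "b < m" "f = {b, cyclic_succ m b}"
      using consecutive_edgeE[OF m2 f] True cons by metis
    have "cyclic_succ m (cyclic_succ m a) = cyclic_succ m (cyclic_succ m b)"
      using diff shift_consecutive_edge[OF m a(1)] shift_consecutive_edge[OF m b(1)] a(2) b(2)
      by simp
    then have "a = b" using a(1) b(1) cyclic_succ_less by (simp add: cyclic_succ_inj)
    then show ?thesis using a b by simp
  next
    case False
    then have "shift_edge m e = shift_edge m f" using diff cons by (auto simp: consecutive_def)
    moreover have "inj_on (cyclic_succ m) {0..<m}" by (simp add: inj_on_def cyclic_succ_inj)
    ultimately show ?thesis
      using edge_complete_graph_lessD[OF e] edge_complete_graph_lessD[OF f]
      unfolding shift_edge_def by (simp add: inj_on_image_eq_iff subset_eq)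
  qed
qed

lemma skip_edge_not_consecutive:
  assumes m: "4 \<le> m" and x: "x < m"
  shows "\<not> consecutive m {x, cyclic_succ m (cyclic_succ m x)}"
proof -
  define s where "s = cyclic_succ m"
  have "s x < m" "s (s x) < m" using x by (simp_all add: s_def cyclic_succ_less)
  then have "s x \<noteq> x" "s (s x) \<noteq> s x" "s (s (s x)) \<noteq> x" "s (s (s x)) \<noteq> s (s x)"
    using m x cyclic_succ_ne[of m] cyclic_succ3_ne[of m] unfolding s_def by simp_all
  then show ?thesis by (auto simp: consecutive_def shift_edge_def s_def)
qed

lemma shift_colors_cover:
  assumes m: "4 \<le> m" and x: "x < m" and l: "m < l"
  shows "\<exists>e\<in>edges (complete_graph m). x \<in> e \<and> l \<notin> shift_colors m e"
proof (cases "l = Suc m")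
  case True
  define e where "e = {x, cyclic_succ m (cyclic_succ m x)}"
  have "e \<in> edges (complete_graph m)"
    using m x cyclic_succ2_ne[of m x] cyclic_succ_less[OF cyclic_succ_less[OF x]]
    by (simp add: e_def)
  moreover have "l \<notin> shift_colors m e"
    using Suc_m_in_shift_colors_iff[OF \<open>e \<in> _\<close>] skip_edge_not_consecutive[OF m x] True
    by (simp add: e_def)
  ultimately show ?thesis by (auto simp: e_def)
next
  case False
  define e where "e = {x, cyclic_succ m x}"
  have "e \<in> edges (complete_graph m)"
    using x cyclic_succ_ne[of m x] cyclic_succ_less[OF x] m by (simp add: e_def)
  moreover have "l \<notin> shift_colors m e" using shift_colors_subset[OF \<open>e \<in> _\<close>] l False by auto
  ultimately show ?thesis by (auto simp: e_def)
qed

text \<open>With \<open>n + 2\<close> colours, colour \<open>x\<close> with \<open>x + 1\<close> and let the copy of \<open>e\<close> miss the colours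
  of the vertices in \<open>(e + 1) - e\<close>, where \<open>e + 1\<close> is \<open>e\<close> shifted cyclically; this set
  determines \<open>e\<close>. For the consecutive edges \<open>{a, a + 1}\<close> it is the single vertex \<open>a + 2\<close>, and
  the extra colour \<open>m + 1\<close> is missing as well. As \<open>m \<ge> 4\<close>, the edge \<open>{x, x + 2}\<close> is not
  consecutive, so its copy shows \<open>Inl x\<close> the colour \<open>m + 1\<close>.\<close>

lemma locating_coloring_Suc_Suc_n:
  assumes m: "4 \<le> m" and mn: "m \<le> n"
  shows "\<exists>c. locating_rainbow_coloring (K_corona m n) (Suc (Suc n)) c"
proof -
  let ?E = "edges (complete_graph m)"
  have m3: "3 \<le> m" using m by simp
  have shift_range: "shift_colors m e \<subseteq> {1..Suc (Suc n)}" if "e \<in> ?E" for e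
    using shift_colors_subset[OF that] mn by auto
  have missing: "shift_colors m e - Suc ` e = shift_colors m e" if "e \<in> ?E" for e
    using shift_colors_disjoint[OF that] by blast
  interpret corona_coloring_data m n "Suc (Suc n)" Suc "shift_colors m"
  proof unfold_locales
    show "Suc ` {0..<m} \<subseteq> {1..Suc (Suc n)}" using mn by auto
    show "shift_colors m e \<subseteq> {1..Suc (Suc n)}" if "e \<in> ?E" for e using shift_range[OF that] .
    show "card ({1..Suc (Suc n)} - shift_colors m e) = n" if "e \<in> ?E" for e
    proof -
      have "finite (shift_colors m e)" using shift_range[OF that] finite_subset by blast
      from card_Diff_subset[OF this shift_range[OF that]] card_shift_colors[OF m3 that]
      show ?thesis by simp
    qed
  qed simp
  have "locating_rainbow_coloring (K_corona m n) (Suc (Suc n)) col"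
  proof (rule locating_coloring)
    show "shift_colors m e - Suc ` e \<noteq> {}" if "e \<in> ?E" for e
      using missing[OF that] card_shift_colors[OF m3 that] by auto
    show "inj_on (\<lambda>e. shift_colors m e - Suc ` e) ?E"
      using inj_on_shift_colors[OF m3] missing by (simp add: inj_on_def)
    show "\<exists>e\<in>?E. x \<in> e \<and> l \<notin> shift_colors m e"
      if x: "x < m" and l: "l \<in> {1..Suc (Suc n)} - Suc ` {0..<m}" for x l
    proof (rule shift_colors_cover[OF m x])
      show "m < l"
      proof (rule ccontr)
        assume "\<not> m < l"
        then have "l - 1 \<in> {0..<m}" "l = Suc (l - 1)" using l by auto
        then have "l \<in> Suc ` {0..<m}" by (rule rev_image_eqI)
        then show False using l by blast
      qed
    qed
  qed
  then show ?thesis by blast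
qed

lemma rvcl_eqI:
  assumes "locating_rainbow_coloring G k c"
    and "\<And>k' c'. locating_rainbow_coloring G k' c' \<Longrightarrow> k \<le> k'"
  shows "rvcl G = k"
  unfolding rvcl_def using assms by (intro Least_equality) blast+

theorem theorem9:
  fixes m n :: nat
  assumes "m \<ge> 3" and "n \<ge> 2" and "m \<le> n"
  shows "rvcl (edge_corona (complete_graph m) (complete_graph n)) =
           (if n \<ge> card (edges (complete_graph m)) - 1 then n + 1 else n + 2)"
proof -
  have lower: "Suc n \<le> k" if "locating_rainbow_coloring (K_corona m n) k c" for k c
    using locating_K_corona.n_less_k[of m n k c] that assms(1) by (simp add: locating_K_corona_def)
  have tight: "card (edges (complete_graph m)) \<le> Suc n"
    if "locating_rainbow_coloring (K_corona m n) (Suc n) c" for c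
    using locating_K_corona_tight.card_edges_le[of m n "Suc n" c] that assms(2)
    by (simp add: locating_K_corona_tight_def locating_K_corona_tight_axioms_def
        locating_K_corona_def)
  show ?thesis
  proof (cases "card (edges (complete_graph m)) \<le> Suc n")
    case True
    then obtain c where "locating_rainbow_coloring (K_corona m n) (Suc n) c"
      using locating_coloring_Suc_n assms(1) by blast
    then have "rvcl (K_corona m n) = Suc n" using lower by (rule rvcl_eqI)
    with True show ?thesis by simp
  next
    case False
    have "card (edges (complete_graph 3)) = 3" by (simp add: card_edges_complete_graph choose_two)
    then have "4 \<le> m" using False assms(1,2) by (cases "m = 3") auto
    then obtain c where "locating_rainbow_coloring (K_corona m n) (Suc (Suc n)) c"
      using locating_coloring_Suc_Suc_n assms(3) by blast
    moreover have "Suc (Suc n) \<le> k" if "locating_rainbow_coloring (K_corona m n) k c'" for k c'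
      using lower[OF that] tight[of c'] that False by (cases "k = Suc n") auto
    ultimately have "rvcl (K_corona m n) = Suc (Suc n)" by (rule rvcl_eqI)
    with False show ?thesis by simp
  qed
qed

end
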